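(* Let $(\rho,\mu,\nu)$ be a regular triple of standard representations of $\mathcal{W}_N$ and $a,c\in\mathbb{Z}/N$. Then, as $N^2\times N^2$ matrices, $$R(\rho,\mu,\nu|a,c)=(y_{\rho\mu}y_{\mu\nu})^P\,\omega^{ac/2}\;Y_1^{-a}Z_1^{-c}\,R(\rho,\mu,\nu)\,Z_1^{c}Z_2^{-a},$$ where $Y_1=Y\otimes\mathrm{id}$, $Z_1=Z\otimes\mathrm{id}$, $Z_2=\mathrm{id}\otimes Z$.
   Context: $N\ge3$ odd, $N=2P+1$, $\omega=e^{2\pi i/N}$; for integers $r,s$ with $s$ invertible mod $N$, $\omega^{r/s}:=\omega^{rs'}$, $ss'\equiv1\pmod N$ (so $\omega^{1/2}=\omega^{P+1}$). Indices run over $\mathbb{Z}/N$; $\delta(n)=1$ if $n\equiv0\pmod N$, else $0$. $X,Z,Y$ are the $N\times N$ matrices $X_{ij}=\delta(i-j-1)$, $Z_{ij}=\omega^i\delta(i-j)$, $Y=\omega^{1/2}XZ$, i.e. $Y_{ij}=\omega^{1/2+j}\delta(i-j-1)$. $\mathcal{W}_N$: unital $\mathbb{C}$-algebra generated by $E,E^{-1},D$ with $EE^{-1}=E^{-1}E=1$, $ED=\omega DE$, $\Delta(E)=E\otimes E$, $\Delta(D)=E\otimes D+D\otimes1$; tensor products via $\Delta$; cyclic = $E,D$ act invertibly; regular = every tensor product of consecutive terms cyclic. The standard representation with parameters $(a_\rho,y_\rho)\in(\mathbb{C}^* )^2$ is $\rho(E)=a_\rho^2Z$, $\rho(D)=a_\rho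 y_\rho X$. A determination $u\mapsto u^{1/N}$ of the $N$-th root is fixed; $\rho\mu$ has $a_{\rho\mu}=a_\rho a_\mu$, $y_{\rho\mu}=(a_\rho^Ny_\mu^N+y_\rho^Na_\mu^{-N})^{1/N}$; products are associative. Standing convention: $-\frac{y_\rho y_\nu}{y_{\rho\mu\nu}y_\mu}=r\big(\frac{y_{\rho\mu}y_{\mu\nu}}{y_{\rho\mu\nu}y_\mu}\big)$. Functions: for $x^N+y^N=z^N$, $\omega(x,y,z|n)=\prod_{j=1}^n\frac{y}{z-x\omega^j}$ ($0\le n\le N-1$), extended $N$-periodically; $\omega(x,y,z|m,n)=\omega(x,y,z|m-n)\omega^{n^2/2}$. $g(x)=\prod_{j=1}^{N-1}(1-x\omega^j)^{j/N}$, $r(x)=(1-x^N)^{1/N}$ (analytic continuations from $0$ to $\mathbb{C}\setminus\{|x|\ge1,\arg x\in\theta+\frac{2\pi}{N}\mathbb{Z}\}$, $\theta$ fixed so $g$ avoids the cuts); $h(x)=x^{-P}g(x)/g(1)$. $R(\rho,\mu,\nu)^{\gamma,\delta}_{\alpha,\beta}=h\big(\frac{y_{\rho\mu}y_{\mu\nu}}{y_{\rho\mu\nu}y_\mu}\big)\omega^{\alpha\delta}\omega(y_{\rho\mu\nu}y_\mu,y_\rho y_\nu,y_{\rho\mu}y_{\mu\nu}|\gamma,\alpha)\delta(\gamma+\delta-\beta)$; $R(\rho,\mu,\nu|a,c)^{\gamma,\delta}_{\alpha,\beta}=(y_{\rho\mu}y_{\mu\nu})^P\omega^{c(\gamma-\alpha)-ac/2}R(\rho,\mu,\nu)^{\gamma-a,\delta}_{\alpha,\beta-a}$.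 Matrix convention: an array $M^{\gamma,\delta}_{\alpha,\beta}$ is the $N^2\times N^2$ matrix with entry $M^{\gamma,\delta}_{\alpha,\beta}$ in row $(\alpha,\beta)$ and column $(\gamma,\delta)$; $A\otimes B$ has entry $A_{\alpha\gamma}B_{\beta\delta}$ in row $(\alpha,\beta)$, column $(\gamma,\delta)$; products are matrix products. *)

theory Defs
  imports "HOL-Analysis.Analysis"
begin

definition om :: "nat \<Rightarrow> int \<Rightarrow> complex" where
  "om N k = cis (2 * pi * of_int k / of_nat N)"

text \<open>P with N = 2P+1.\<close>
definition PP :: "nat \<Rightarrow> nat" where
  "PP N = (N - 1) div 2"

text \<open>omega^(k/2) := omega^(k * s') with 2 s' = 1 mod N, s' = P+1.\<close>
definition om_half :: "nat \<Rightarrow> int \<Rightarrow> complex" where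
  "om_half N k = om N (k * (int (PP N) + 1))"

definition dlt :: "nat \<Rightarrow> int \<Rightarrow> complex" where
  "dlt N n = (if n mod int N = 0 then 1 else 0)"

type_synonym 'i mat = "'i \<Rightarrow> 'i \<Rightarrow> complex"

definition Idx :: "nat \<Rightarrow> int set" where
  "Idx N = {0..<int N}"

definition mmult :: "'i set \<Rightarrow> 'i mat \<Rightarrow> 'i mat \<Rightarrow> 'i mat" where
  "mmult I A B = (\<lambda>i k. \<Sum>j\<in>I. A i j * B j k)"

definition idm :: "'i mat" where
  "idm = (\<lambda>i j. if i = j then 1 else 0)"

definition is_inverse_on :: "'i set \<Rightarrow> 'i mat \<Rightarrow> 'i mat \<Rightarrow> bool" where
  "is_inverse_on I A B \<longleftrightarrow>
     (\<forall>i\<in>I. \<forall>k\<in>I. mmult I A B i k = idm i k \<and> mmult I B A i k = idm i k)"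

definition invertible_on :: "'i set \<Rightarrow> 'i mat \<Rightarrow> bool" where
  "invertible_on I A \<longleftrightarrow> (\<exists>B. is_inverse_on I A B)"

definition minv :: "'i set \<Rightarrow> 'i mat \<Rightarrow> 'i mat" where
  "minv I A = (SOME B. is_inverse_on I A B)"

fun mpow :: "'i set \<Rightarrow> 'i mat \<Rightarrow> nat \<Rightarrow> 'i mat" where
  "mpow I A 0 = idm"
| "mpow I A (Suc n) = mmult I (mpow I A n) A"

definition ipow :: "'i set \<Rightarrow> 'i mat \<Rightarrow> int \<Rightarrow> 'i mat" where
  "ipow I A k = (if k \<ge> 0 then mpow I A (nat k) else mpow I (minv I A) (nat (- k)))"

definition kron :: "'i mat \<Rightarrow> 'j mat \<Rightarrow> ('i \<times> 'j) mat" where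
  "kron A B = (\<lambda>(i1, i2) (j1, j2). A i1 j1 * B i2 j2)"

definition Xm :: "nat \<Rightarrow> int mat" where
  "Xm N = (\<lambda>i j. dlt N (i - j - 1))"

definition Zm :: "nat \<Rightarrow> int mat" where
  "Zm N = (\<lambda>i j. om N i * dlt N (i - j))"

definition Ym :: "nat \<Rightarrow> int mat" where
  "Ym N = (\<lambda>i j. om_half N 1 * om N j * dlt N (i - j - 1))"

text \<open>A representation is given by the pair of matrices (image of E, image of D).\<close>
type_synonym 'i rep = "'i mat \<times> 'i mat"

definition std_rep :: "nat \<Rightarrow> complex \<Rightarrow> complex \<Rightarrow> int rep" where
  "std_rep N a y = ((\<lambda>i j. a^2 * Zm N i j), (\<lambda>i j. a * y * Xm N i j))"

text \<open>Tensor product via Delta(E) = E (x) E, Delta(D) = E (x) D + D (x) 1.\<close>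
definition tensor_rep :: "'i rep \<Rightarrow> 'j rep \<Rightarrow> ('i \<times> 'j) rep" where
  "tensor_rep r s = (kron (fst r) (fst s),
                     (\<lambda>p q. kron (fst r) (snd s) p q + kron (snd r) idm p q))"

definition cyclic_rep :: "'i set \<Rightarrow> 'i rep \<Rightarrow> bool" where
  "cyclic_rep I r \<longleftrightarrow> invertible_on I (fst r) \<and> invertible_on I (snd r)"

definition regular_triple :: "nat \<Rightarrow> int rep \<Rightarrow> int rep \<Rightarrow> int rep \<Rightarrow> bool" where
  "regular_triple N r m n \<longleftrightarrow>
     cyclic_rep (Idx N) r \<and> cyclic_rep (Idx N) m \<and> cyclic_rep (Idx N) n \<and>
     cyclic_rep (Idx N \<times> Idx N) (tensor_rep r m) \<and>
     cyclic_rep (Idx N \<times> Idx N) (tensor_rep m n) \<and>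
     cyclic_rep ((Idx N \<times> Idx N) \<times> Idx N) (tensor_rep (tensor_rep r m) n)"

text \<open>y_{rho mu} = (a_rho^N y_mu^N + y_rho^N a_mu^(-N))^(1/N), with a fixed
  determination rt of the N-th root.\<close>
definition yprod :: "nat \<Rightarrow> (complex \<Rightarrow> complex) \<Rightarrow> complex \<Rightarrow> complex \<Rightarrow> complex \<Rightarrow> complex \<Rightarrow> complex" where
  "yprod N rt a1 y1 a2 y2 = rt (a1 ^ N * y2 ^ N + y1 ^ N * inverse (a2 ^ N))"

definition omg :: "nat \<Rightarrow> complex \<Rightarrow> complex \<Rightarrow> complex \<Rightarrow> int \<Rightarrow> complex" where
  "omg N x y z n = (\<Prod>j\<in>{1..n mod int N}. y / (z - x * om N j))"

definition omg2 :: "nat \<Rightarrow> complex \<Rightarrow> complex \<Rightarrow> complex \<Rightarrow> int \<Rightarrow> int \<Rightarrow> complex" where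
  "omg2 N x y z m n = omg N x y z (m - n) * om_half N (n^2)"

text \<open>g and r: analytic continuation from 0 along radial segments in the slit
  (star-shaped) domain; along a segment starting at 1 the continuous logarithm of
  1 - t x omega^j (resp. 1 - t^N x^N) is the principal one, so these are given by
  principal-branch complex powers.\<close>
definition gfun :: "nat \<Rightarrow> complex \<Rightarrow> complex" where
  "gfun N x = (\<Prod>j\<in>{1..int N - 1}. (1 - x * om N j) powr (of_int j / of_nat N))"

definition rfun :: "nat \<Rightarrow> complex \<Rightarrow> complex" where
  "rfun N x = (1 - x ^ N) powr (1 / of_nat N)"

definition hfun :: "nat \<Rightarrow> complex \<Rightarrow> complex" where
  "hfun N x = inverse (x ^ PP N) * gfun N x / gfun N 1"

text \<open>Arrays M^{gamma,delta}_{alpha,beta} are matrices on index pairs: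
  row (alpha,beta), column (gamma,delta).\<close>
definition Rmat :: "nat \<Rightarrow> (complex \<Rightarrow> complex) \<Rightarrow> complex \<Rightarrow> complex \<Rightarrow> complex \<Rightarrow> complex
    \<Rightarrow> complex \<Rightarrow> complex \<Rightarrow> (int \<times> int) mat" where
  "Rmat N rt ar yr am ym an yn = (\<lambda>(\<alpha>, \<beta>) (\<gamma>, \<delta>).
     (let yrm = yprod N rt ar yr am ym;
          ymn = yprod N rt am ym an yn;
          yrmn = yprod N rt (ar * am) yrm an yn
      in hfun N (yrm * ymn / (yrmn * ym)) * om N (\<alpha> * \<delta>)
         * omg2 N (yrmn * ym) (yr * yn) (yrm * ymn) \<gamma> \<alpha> * dlt N (\<gamma> + \<delta> - \<beta>)))"

definition Rmat_ac :: "nat \<Rightarrow> (complex \<Rightarrow> complex) \<Rightarrow> complex \<Rightarrow> complex \<Rightarrow> complex \<Rightarrow> complex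
    \<Rightarrow> complex \<Rightarrow> complex \<Rightarrow> int \<Rightarrow> int \<Rightarrow> (int \<times> int) mat" where
  "Rmat_ac N rt ar yr am ym an yn a c = (\<lambda>(\<alpha>, \<beta>) (\<gamma>, \<delta>).
     (let yrm = yprod N rt ar yr am ym;
          ymn = yprod N rt am ym an yn
      in (yrm * ymn) ^ PP N * (om N (c * (\<gamma> - \<alpha>)) * om_half N (- (a * c)))
         * Rmat N rt ar yr am ym an yn (\<alpha>, \<beta> - a) (\<gamma> - a, \<delta>)))"

end

theory Submission
  imports Defs
begin

(* Y and Z are monomial matrices, and so are their integer powers: Y^k and Z^k have one nonzero
   entry per row, with an explicit phase, and these explicit powers form a one-parameter group
   (for Y this uses 2 (P + 1) = N + 1). Conjugating R by Y_1^(-a) Z_1^(-c) on the left and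
   Z_1^c Z_2^(-a) on the right therefore only shifts the row index alpha by a and multiplies each
   entry by a phase. On the other side, the entry R(alpha, beta - a; gamma - a, delta) occurring
   in R(a, c) is, by translation covariance of the defining formula of R, a phase times
   R(alpha + a, beta; gamma, delta), and the two phases agree modulo N. *)

(* the inverse of 2 modulo N, so that om N (k * inv2 N) is omega^(k/2) *)
definition inv2 :: "nat \<Rightarrow> int" where
  "inv2 N = int (PP N) + 1"

lemma two_inv2: "odd N \<Longrightarrow> 2 * inv2 N = int N + 1"
  unfolding inv2_def PP_def by (auto elim!: oddE)

lemma om_half_eq: "om_half N k = om N (k * inv2 N)"
  unfolding om_half_def inv2_def ..

lemma om_add: "om N (x + y) = om N x * om N y"
  unfolding om_def by (simp add: cis_mult add_divide_distrib distrib_left)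

lemma om_eqI:
  assumes "N > 0" and "int N dvd x - y"
  shows "om N x = om N y"
proof -
  obtain k where x: "x = y + int N * k"
    using assms(2) by (metis dvdE add_diff_cancel_left' add_diff_eq diff_add_cancel)
  have "2 * pi * of_int (int N * k) / of_nat N = 2 * pi * real_of_int k"
    using assms(1) by simp
  then have "om N (int N * k) = 1"
    unfolding om_def by (simp add: cis_multiple_2pi)
  then show ?thesis
    unfolding x om_add by simp
qed

lemma mod_eq_minus_mult: "x mod int N = x - int N * (x div int N)"
  by (simp add: minus_div_mult_eq_mod[symmetric] mult.commute)

lemma om_zero [simp]: "om N 0 = 1"
  unfolding om_def by simp

lemma om_mult_mod:
  assumes "N > 0"
  shows "om N (k * (i mod int N)) = om N (k * i)"
  unfolding mod_eq_minus_mult[of i] by (rule om_eqI[OF assms]) algebra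

lemma dlt_eqI:
  assumes "int N dvd x - y"
  shows "dlt N x = dlt N y"
proof -
  have "x mod int N = y mod int N"
    using assms by (simp add: mod_eq_dvd_iff)
  then show ?thesis
    unfolding dlt_def by simp
qed

lemma finite_Idx [simp]: "finite (Idx N)"
  unfolding Idx_def by simp

lemma mod_in_Idx: "N > 0 \<Longrightarrow> x mod int N \<in> Idx N"
  unfolding Idx_def by simp

lemma mod_Idx_eq: "i \<in> Idx N \<Longrightarrow> i mod int N = i"
  unfolding Idx_def by simp

lemma sum_idm_left:
  assumes "finite I" "b \<in> I"
  shows "(\<Sum>j\<in>I. idm b j * f j) = f b"
proof -
  have "(\<Sum>j\<in>I. idm b j * f j) = (\<Sum>j\<in>I. if b = j then f j else 0)"
    by (intro sum.cong) (auto simp: idm_def)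
  then show ?thesis
    using assms by simp
qed

lemma sum_idm_right:
  assumes "finite I" "b \<in> I"
  shows "(\<Sum>j\<in>I. f j * idm j b) = f b"
proof -
  have "(\<Sum>j\<in>I. f j * idm j b) = (\<Sum>j\<in>I. if b = j then f j else 0)"
    by (intro sum.cong) (auto simp: idm_def)
  then show ?thesis
    using assms by simp
qed

lemma dlt_Idx:
  assumes "i \<in> Idx N" "j \<in> Idx N"
  shows "dlt N (i - j) = idm i j"
proof -
  have "(i - j) mod int N = 0 \<longleftrightarrow> i mod int N = j mod int N"
    by (simp add: mod_eq_dvd_iff dvd_eq_mod_eq_0[symmetric])
  then show ?thesis
    unfolding dlt_def idm_def mod_Idx_eq[OF assms(1)] mod_Idx_eq[OF assms(2)] by simp
qed

lemma sum_dlt: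
  assumes "N > 0"
  shows "(\<Sum>j\<in>Idx N. dlt N (t - j) * g j) = g (t mod int N)"
proof -
  have "dlt N (t - j) = idm (t mod int N) j" if "j \<in> Idx N" for j
  proof -
    have "dlt N (t - j) = dlt N (t mod int N - j)"
      unfolding mod_eq_minus_mult[of t] by (rule dlt_eqI) algebra
    then show ?thesis
      using dlt_Idx[OF mod_in_Idx[OF assms] that] by simp
  qed
  then have "(\<Sum>j\<in>Idx N. dlt N (t - j) * g j) = (\<Sum>j\<in>Idx N. idm (t mod int N) j * g j)"
    by (intro sum.cong) auto
  then show ?thesis
    using sum_idm_left[OF finite_Idx mod_in_Idx[OF assms]] by simp
qed

definition mat_eq_on :: "'i set \<Rightarrow> 'i mat \<Rightarrow> 'i mat \<Rightarrow> bool" where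
  "mat_eq_on I A B \<longleftrightarrow> (\<forall>i\<in>I. \<forall>j\<in>I. A i j = B i j)"

lemma mat_eq_on_refl [simp]: "mat_eq_on I A A"
  unfolding mat_eq_on_def by simp

lemma mat_eq_on_sym: "mat_eq_on I A B \<Longrightarrow> mat_eq_on I B A"
  unfolding mat_eq_on_def by simp

lemma mat_eq_on_trans [trans]: "mat_eq_on I A B \<Longrightarrow> mat_eq_on I B C \<Longrightarrow> mat_eq_on I A C"
  unfolding mat_eq_on_def by simp

lemma mmult_mat_eq_on_cong:
  "mat_eq_on I A A' \<Longrightarrow> mat_eq_on I B B' \<Longrightarrow> mat_eq_on I (mmult I A B) (mmult I A' B')"
  unfolding mat_eq_on_def mmult_def by (auto intro!: sum.cong)

lemma mmult_assoc: "finite I \<Longrightarrow> mmult I (mmult I A B) C = mmult I A (mmult I B C)"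
  unfolding mmult_def
  by (auto simp: sum_distrib_left sum_distrib_right mult.assoc
           intro!: ext sum.swap[where A = I and B = I, simplified])

lemma mmult_idm_right: "finite I \<Longrightarrow> mat_eq_on I (mmult I A idm) A"
  unfolding mat_eq_on_def mmult_def by (simp add: sum_idm_right)

lemma mmult_idm_left: "finite I \<Longrightarrow> mat_eq_on I (mmult I idm A) A"
  unfolding mat_eq_on_def mmult_def by (simp add: sum_idm_left)

lemma minv_eq_on:
  assumes fin: "finite I" and AB: "is_inverse_on I A B"
  shows "mat_eq_on I (minv I A) B"
proof -
  define M where "M = minv I A"
  have "is_inverse_on I A M"
    unfolding M_def minv_def by (rule someI[where P = "is_inverse_on I A", OF AB])
  then have MA: "mat_eq_on I (mmult I M A) idm"
    unfolding is_inverse_on_def mat_eq_on_def by auto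
  have "mat_eq_on I M (mmult I M idm)"
    by (rule mat_eq_on_sym[OF mmult_idm_right[OF fin]])
  also have "mat_eq_on I \<dots> (mmult I M (mmult I A B))"
    using AB unfolding is_inverse_on_def
    by (intro mmult_mat_eq_on_cong) (auto simp: mat_eq_on_def)
  also have "mmult I M (mmult I A B) = mmult I (mmult I M A) B"
    by (rule mmult_assoc[OF fin, symmetric])
  also have "mat_eq_on I \<dots> (mmult I idm B)"
    by (rule mmult_mat_eq_on_cong[OF MA mat_eq_on_refl])
  also have "mat_eq_on I \<dots> B"
    by (rule mmult_idm_left[OF fin])
  finally show ?thesis
    unfolding M_def .
qed

definition int_power_family :: "'i set \<Rightarrow> (int \<Rightarrow> 'i mat) \<Rightarrow> bool" where
  "int_power_family I F \<longleftrightarrow>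
     mat_eq_on I (F 0) idm \<and> (\<forall>m n. mat_eq_on I (mmult I (F m) (F n)) (F (m + n)))"

lemma mpow_eq_family:
  assumes F: "int_power_family I F" and A: "mat_eq_on I A (F k)"
  shows "mat_eq_on I (mpow I A n) (F (int n * k))"
proof (induction n)
  case 0
  then show ?case
    using F unfolding int_power_family_def by (simp add: mat_eq_on_sym)
next
  case (Suc n)
  have "mat_eq_on I (mmult I (mpow I A n) A) (mmult I (F (int n * k)) (F k))"
    by (rule mmult_mat_eq_on_cong[OF Suc A])
  also have "mat_eq_on I \<dots> (F (int n * k + k))"
    using F unfolding int_power_family_def by blast
  finally show ?case
    by (simp add: algebra_simps)
qed

lemma ipow_eq_family:
  assumes fin: "finite I" and F: "int_power_family I F" and A: "mat_eq_on I A (F 1)"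
  shows "mat_eq_on I (ipow I A k) (F k)"
proof (cases "k \<ge> 0")
  case True
  then show ?thesis
    unfolding ipow_def using mpow_eq_family[OF F A, of "nat k"] by simp
next
  case False
  have "mat_eq_on I (mmult I A (F (-1))) idm" "mat_eq_on I (mmult I (F (-1)) A) idm"
    using F mmult_mat_eq_on_cong[OF A mat_eq_on_refl, of "F (-1)"]
      mmult_mat_eq_on_cong[OF mat_eq_on_refl A, of "F (-1)"]
    unfolding int_power_family_def by (metis add.right_inverse add.left_inverse mat_eq_on_trans)+
  then have "is_inverse_on I A (F (-1))"
    unfolding is_inverse_on_def mat_eq_on_def by auto
  then have "mat_eq_on I (minv I A) (F (-1))"
    by (rule minv_eq_on[OF fin])
  from mpow_eq_family[OF F this, of "nat (- k)"] False show ?thesis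
    unfolding ipow_def by simp
qed

lemma mmult_kron: "mmult (I \<times> J) (kron A B) (kron C D) = kron (mmult I A C) (mmult J B D)"
  unfolding mmult_def kron_def
  by (auto simp: sum_product sum.cartesian_product mult_ac intro!: ext sum.cong)

lemma kron_idm_idm: "kron idm idm = idm"
  unfolding kron_def idm_def by (auto intro!: ext)

lemma kron_mat_eq_on_cong:
  "mat_eq_on I A A' \<Longrightarrow> mat_eq_on J B B' \<Longrightarrow> mat_eq_on (I \<times> J) (kron A B) (kron A' B')"
  unfolding mat_eq_on_def kron_def by auto

lemma int_power_family_kron:
  assumes F: "int_power_family I F" and G: "int_power_family J G"
  shows "int_power_family (I \<times> J) (\<lambda>k. kron (F k) (G k))"
proof -
  have "mat_eq_on (I \<times> J) (kron (F 0) (G 0)) (kron idm idm)"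
    using F G unfolding int_power_family_def by (intro kron_mat_eq_on_cong) auto
  moreover have "mat_eq_on (I \<times> J) (mmult (I \<times> J) (kron (F m) (G m)) (kron (F n) (G n)))
      (kron (F (m + n)) (G (m + n)))" for m n
    using F G unfolding int_power_family_def mmult_kron by (intro kron_mat_eq_on_cong) auto
  ultimately show ?thesis
    unfolding int_power_family_def kron_idm_idm by blast
qed

lemma int_power_family_const_idm: "finite I \<Longrightarrow> int_power_family I (\<lambda>_. idm)"
  unfolding int_power_family_def by (simp add: mmult_idm_left)

lemma ipow_kron_idm:
  assumes "finite I" "finite J" "int_power_family I F" "mat_eq_on I A (F 1)"
  shows "mat_eq_on (I \<times> J) (ipow (I \<times> J) (kron A idm) k) (kron (F k) idm)"
proof (rule ipow_eq_family)
  show "int_power_family (I \<times> J) (\<lambda>k. kron (F k) idm)"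
    by (rule int_power_family_kron[OF assms(3) int_power_family_const_idm[OF assms(2)]])
  show "mat_eq_on (I \<times> J) (kron A idm) (kron (F 1) idm)"
    by (rule kron_mat_eq_on_cong[OF assms(4) mat_eq_on_refl])
qed (use assms in simp)

lemma ipow_idm_kron:
  assumes "finite I" "finite J" "int_power_family J F" "mat_eq_on J A (F 1)"
  shows "mat_eq_on (I \<times> J) (ipow (I \<times> J) (kron idm A) k) (kron idm (F k))"
proof (rule ipow_eq_family)
  show "int_power_family (I \<times> J) (\<lambda>k. kron idm (F k))"
    by (rule int_power_family_kron[OF int_power_family_const_idm[OF assms(1)] assms(3)])
  show "mat_eq_on (I \<times> J) (kron idm A) (kron idm (F 1))"
    by (rule kron_mat_eq_on_cong[OF mat_eq_on_refl assms(4)])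
qed (use assms in simp)

lemma mmult_kron_idm_left:
  assumes "finite J" "\<beta> \<in> J"
  shows "mmult (I \<times> J) (kron A idm) M (\<alpha>, \<beta>) q = (\<Sum>j\<in>I. A \<alpha> j * M (j, \<beta>) q)"
proof -
  have "mmult (I \<times> J) (kron A idm) M (\<alpha>, \<beta>) q
      = (\<Sum>j1\<in>I. A \<alpha> j1 * (\<Sum>j2\<in>J. idm \<beta> j2 * M (j1, j2) q))"
    unfolding mmult_def kron_def sum_distrib_left sum.cartesian_product
    by (intro sum.cong) (auto simp: mult_ac)
  then show ?thesis
    by (simp add: sum_idm_left[OF assms])
qed

lemma mmult_kron_idm_right:
  assumes "finite J" "\<delta> \<in> J"
  shows "mmult (I \<times> J) M (kron A idm) p (\<gamma>, \<delta>) = (\<Sum>j\<in>I. M p (j, \<delta>) * A j \<gamma>)"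
proof -
  have "mmult (I \<times> J) M (kron A idm) p (\<gamma>, \<delta>)
      = (\<Sum>j1\<in>I. \<Sum>j2\<in>J. (M p (j1, j2) * A j1 \<gamma>) * idm j2 \<delta>)"
    unfolding mmult_def kron_def sum.cartesian_product by (intro sum.cong) (auto simp: mult_ac)
  then show ?thesis
    by (simp add: sum_idm_right[OF assms])
qed

lemma mmult_idm_kron_right:
  assumes "finite I" "\<gamma> \<in> I"
  shows "mmult (I \<times> J) M (kron idm A) p (\<gamma>, \<delta>) = (\<Sum>j\<in>J. M p (\<gamma>, j) * A j \<delta>)"
proof -
  have "mmult (I \<times> J) M (kron idm A) p (\<gamma>, \<delta>)
      = (\<Sum>j1\<in>I. \<Sum>j2\<in>J. (M p (j1, j2) * A j2 \<delta>) * idm j1 \<gamma>)"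
    unfolding mmult_def kron_def sum.cartesian_product by (intro sum.cong) (auto simp: mult_ac)
  also have "\<dots> = (\<Sum>j2\<in>J. \<Sum>j1\<in>I. (M p (j1, j2) * A j2 \<delta>) * idm j1 \<gamma>)"
    by (rule sum.swap)
  finally show ?thesis
    by (simp add: sum_idm_right[OF assms])
qed

definition wshift :: "nat \<Rightarrow> int \<Rightarrow> (int \<Rightarrow> complex) \<Rightarrow> int mat" where
  "wshift N s f = (\<lambda>i j. f i * dlt N (i - j - s))"

lemma sum_wshift:
  "N > 0 \<Longrightarrow> (\<Sum>j\<in>Idx N. wshift N s f i j * g j) = f i * g ((i - s) mod int N)"
  unfolding wshift_def using sum_dlt[of N "i - s" g]
  by (simp add: mult.assoc sum_distrib_left[symmetric] algebra_simps)

lemma mmult_wshift_left: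
  "N > 0 \<Longrightarrow> mmult (Idx N) (wshift N s f) B i k = f i * B ((i - s) mod int N) k"
  unfolding mmult_def by (rule sum_wshift)

lemma mmult_wshift:
  assumes "N > 0"
  shows "mmult (Idx N) (wshift N s f) (wshift N t g)
       = wshift N (s + t) (\<lambda>i. f i * g ((i - s) mod int N))"
proof (intro ext)
  fix i k
  have "dlt N ((i - s) mod int N - k - t) = dlt N (i - k - (s + t))"
    unfolding mod_eq_minus_mult[of "i - s"] by (rule dlt_eqI) algebra
  then show "mmult (Idx N) (wshift N s f) (wshift N t g) i k
       = wshift N (s + t) (\<lambda>i. f i * g ((i - s) mod int N)) i k"
    unfolding mmult_wshift_left[OF assms] by (simp add: wshift_def)
qed

lemma wshift_diag_Idx: "i \<in> Idx N \<Longrightarrow> j \<in> Idx N \<Longrightarrow> wshift N 0 g i j = g i * idm i j"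
  unfolding wshift_def by (simp add: dlt_Idx)

lemma wshift_idm: "mat_eq_on (Idx N) (wshift N 0 (\<lambda>_. 1)) idm"
  unfolding mat_eq_on_def by (simp add: wshift_diag_Idx)

lemma mmult_kron_wshift_idm_left:
  assumes "N > 0" "\<beta> \<in> Idx N"
  shows "mmult (Idx N \<times> Idx N) (kron (wshift N s f) idm) M (\<alpha>, \<beta>) q
       = f \<alpha> * M ((\<alpha> - s) mod int N, \<beta>) q"
  unfolding mmult_kron_idm_left[OF finite_Idx assms(2)] by (rule sum_wshift[OF assms(1)])

lemma mmult_kron_diag_idm_right:
  assumes "\<gamma> \<in> Idx N" "\<delta> \<in> Idx N"
  shows "mmult (Idx N \<times> Idx N) M (kron (wshift N 0 g) idm) p (\<gamma>, \<delta>) = M p (\<gamma>, \<delta>) * g \<gamma>"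
proof -
  have "(\<Sum>j\<in>Idx N. M p (j, \<delta>) * wshift N 0 g j \<gamma>) = (\<Sum>j\<in>Idx N. (M p (j, \<delta>) * g j) * idm j \<gamma>)"
    by (intro sum.cong) (simp_all add: wshift_diag_Idx assms)
  then show ?thesis
    unfolding mmult_kron_idm_right[OF finite_Idx assms(2)] by (simp add: sum_idm_right assms)
qed

lemma mmult_idm_kron_diag_right:
  assumes "\<gamma> \<in> Idx N" "\<delta> \<in> Idx N"
  shows "mmult (Idx N \<times> Idx N) M (kron idm (wshift N 0 g)) p (\<gamma>, \<delta>) = M p (\<gamma>, \<delta>) * g \<delta>"
proof -
  have "(\<Sum>j\<in>Idx N. M p (\<gamma>, j) * wshift N 0 g j \<delta>) = (\<Sum>j\<in>Idx N. (M p (\<gamma>, j) * g j) * idm j \<delta>)"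
    by (intro sum.cong) (simp_all add: wshift_diag_Idx assms)
  then show ?thesis
    unfolding mmult_idm_kron_right[OF finite_Idx assms(1)] by (simp add: sum_idm_right assms)
qed

definition Zpow :: "nat \<Rightarrow> int \<Rightarrow> int mat" where
  "Zpow N k = wshift N 0 (\<lambda>i. om N (k * i))"

definition Ypow :: "nat \<Rightarrow> int \<Rightarrow> int mat" where
  "Ypow N k = wshift N k (\<lambda>i. om N (k * i - k * k * inv2 N))"

lemma Zm_eq_Zpow: "Zm N = Zpow N 1"
  unfolding Zm_def Zpow_def wshift_def by simp

lemma Ym_eq_Ypow:
  assumes N: "N > 0" "odd N"
  shows "Ym N = Ypow N 1"
proof (intro ext)
  fix i j
  have "om_half N 1 * om N j = om N (i - inv2 N)" if "dlt N (i - j - 1) \<noteq> 0"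
  proof -
    have "int N dvd i - j - 1"
      using that unfolding dlt_def by (auto simp: dvd_eq_mod_eq_0 split: if_splits)
    then obtain t where "i - j - 1 = int N * t"
      by (rule dvdE)
    then have "int N dvd inv2 N + j - (i - inv2 N)"
      using two_inv2[OF N(2)] by algebra
    then show ?thesis
      unfolding om_half_eq om_add[symmetric] by (simp add: om_eqI[OF N(1)])
  qed
  then show "Ym N i j = Ypow N 1 i j"
    unfolding Ym_def Ypow_def wshift_def by force
qed

lemma Zpow_family:
  assumes "N > 0"
  shows "int_power_family (Idx N) (Zpow N)"
proof -
  have "mmult (Idx N) (Zpow N m) (Zpow N n) = Zpow N (m + n)" for m n
    unfolding Zpow_def mmult_wshift[OF assms]
    by (simp add: om_mult_mod[OF assms] om_add[symmetric] distrib_right)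
  then show ?thesis
    unfolding int_power_family_def by (simp add: Zpow_def wshift_idm)
qed

lemma Ypow_family:
  assumes N: "N > 0" "odd N"
  shows "int_power_family (Idx N) (Ypow N)"
proof -
  \<comment> \<open>The cross term 2 m n inv2 N of (m + n)^2 inv2 N matches the term m n coming from the
     shift, because 2 inv2 N = N + 1.\<close>
  have "om N (m * i - m * m * inv2 N) * om N (n * ((i - m) mod int N) - n * n * inv2 N)
      = om N ((m + n) * i - (m + n) * (m + n) * inv2 N)" for m n i
    unfolding om_add[symmetric] mod_eq_minus_mult[of "i - m"]
    by (rule om_eqI[OF N(1)]) (use two_inv2[OF N(2)] in algebra)
  then have "mmult (Idx N) (Ypow N m) (Ypow N n) = Ypow N (m + n)" for m n
    unfolding Ypow_def mmult_wshift[OF N(1)] by simp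
  then show ?thesis
    unfolding int_power_family_def by (simp add: Ypow_def wshift_idm)
qed

lemma conjugate_entry:
  assumes N: "N > 0" and idx: "\<alpha> \<in> Idx N" "\<beta> \<in> Idx N" "\<gamma> \<in> Idx N" "\<delta> \<in> Idx N"
  shows "mmult (Idx N \<times> Idx N)
           (mmult (Idx N \<times> Idx N)
             (mmult (Idx N \<times> Idx N)
               (mmult (Idx N \<times> Idx N) (kron (Ypow N (- a)) idm) (kron (Zpow N (- c)) idm))
               M)
             (kron (Zpow N c) idm))
           (kron idm (Zpow N (- a))) (\<alpha>, \<beta>) (\<gamma>, \<delta>)
       = om N (- a * \<alpha> - a * a * inv2 N) * om N (- c * ((\<alpha> + a) mod int N))
         * M ((\<alpha> + a) mod int N, \<beta>) (\<gamma>, \<delta>) * om N (c * \<gamma>) * om N (- a * \<delta>)"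
  unfolding Zpow_def
  unfolding mmult_idm_kron_diag_right[OF idx(3,4)] mmult_kron_diag_idm_right[OF idx(3,4)]
  unfolding mmult_assoc[OF finite_cartesian_product[OF finite_Idx finite_Idx]]
  unfolding Ypow_def by (simp add: mmult_kron_wshift_idm_left[OF N idx(2)] mult.assoc)

lemma omg_mod_cong: "m mod int N = n mod int N \<Longrightarrow> omg N x y z m = omg N x y z n"
  unfolding omg_def by simp

lemma Rmat_translate:
  assumes N: "N > 0" "odd N"
  shows "Rmat N rt ar yr am ym an yn (\<alpha>, \<beta> - a) (\<gamma> - a, \<delta>)
       = om N (- a * \<delta> - a * \<alpha> - a * a * inv2 N)
         * Rmat N rt ar yr am ym an yn ((\<alpha> + a) mod int N, \<beta>) (\<gamma>, \<delta>)"
proof -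
  define \<alpha>' where "\<alpha>' = (\<alpha> + a) mod int N"
  have \<alpha>': "\<alpha>' = \<alpha> + a - int N * ((\<alpha> + a) div int N)"
    unfolding \<alpha>'_def by (rule mod_eq_minus_mult)
  have omg: "omg N x y z (\<gamma> - (\<alpha> + a)) = omg N x y z (\<gamma> - \<alpha>')" for x y z
    by (rule omg_mod_cong) (simp add: \<alpha>'_def mod_diff_right_eq algebra_simps)
  have phase: "om N (\<alpha> * \<delta>) * om N (\<alpha>\<^sup>2 * inv2 N)
      = om N (- a * \<delta> - a * \<alpha> - a * a * inv2 N) * (om N (\<alpha>' * \<delta>) * om N (\<alpha>'\<^sup>2 * inv2 N))"
    unfolding om_add[symmetric]
    by (rule om_eqI[OF N(1)]) (use \<alpha>' two_inv2[OF N(2)] in algebra)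
  show ?thesis
    unfolding \<alpha>'_def[symmetric] Rmat_def Let_def omg2_def om_half_eq
    using phase by (simp add: omg algebra_simps)
qed

lemma Rmat_ac_entry:
  assumes N: "N > 0" "odd N"
  shows "Rmat_ac N rt ar yr am ym an yn a c (\<alpha>, \<beta>) (\<gamma>, \<delta>)
       = (yprod N rt ar yr am ym * yprod N rt am ym an yn) ^ PP N * om_half N (a * c)
         * (om N (- a * \<alpha> - a * a * inv2 N) * om N (- c * ((\<alpha> + a) mod int N))
            * Rmat N rt ar yr am ym an yn ((\<alpha> + a) mod int N, \<beta>) (\<gamma>, \<delta>)
            * om N (c * \<gamma>) * om N (- a * \<delta>))"
proof -
  define \<alpha>' where "\<alpha>' = (\<alpha> + a) mod int N"
  have \<alpha>': "\<alpha>' = \<alpha> + a - int N * ((\<alpha> + a) div int N)"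
    unfolding \<alpha>'_def by (rule mod_eq_minus_mult)
  have phase: "om N (c * (\<gamma> - \<alpha>)) * om_half N (- (a * c)) * om N (- a * \<delta> - a * \<alpha> - a * a * inv2 N)
      = om_half N (a * c) * om N (- a * \<alpha> - a * a * inv2 N) * om N (- c * \<alpha>')
        * om N (c * \<gamma>) * om N (- a * \<delta>)"
    unfolding om_half_eq om_add[symmetric]
    by (rule om_eqI[OF N(1)]) (use \<alpha>' two_inv2[OF N(2)] in algebra)
  have "Rmat_ac N rt ar yr am ym an yn a c (\<alpha>, \<beta>) (\<gamma>, \<delta>)
      = (yprod N rt ar yr am ym * yprod N rt am ym an yn) ^ PP N
        * (om N (c * (\<gamma> - \<alpha>)) * om_half N (- (a * c)) * om N (- a * \<delta> - a * \<alpha> - a * a * inv2 N))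
        * Rmat N rt ar yr am ym an yn (\<alpha>', \<beta>) (\<gamma>, \<delta>)"
    unfolding Rmat_ac_def Let_def
    unfolding Rmat_translate[OF N] by (simp only: prod.case mult.assoc \<alpha>'_def)
  then show ?thesis
    unfolding phase \<alpha>'_def by (simp only: mult_ac)
qed

theorem lemma6p8:
  fixes N :: nat and rt :: "complex \<Rightarrow> complex"
    and ar yr am ym an yn :: complex and a c :: int
  assumes "odd N" and "N \<ge> 3"
    and "\<forall>u. rt u ^ N = u"
    and "ar \<noteq> 0" "yr \<noteq> 0" "am \<noteq> 0" "ym \<noteq> 0" "an \<noteq> 0" "yn \<noteq> 0"
    and "regular_triple N (std_rep N ar yr) (std_rep N am ym) (std_rep N an yn)"
    and "- (yr * yn) / (yprod N rt (ar * am) (yprod N rt ar yr am ym) an yn * ym)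
           = rfun N (yprod N rt ar yr am ym * yprod N rt am ym an yn
                     / (yprod N rt (ar * am) (yprod N rt ar yr am ym) an yn * ym))"
  shows "\<forall>p\<in>Idx N \<times> Idx N. \<forall>q\<in>Idx N \<times> Idx N.
           Rmat_ac N rt ar yr am ym an yn a c p q
         = (yprod N rt ar yr am ym * yprod N rt am ym an yn) ^ PP N * om_half N (a * c)
           * mmult (Idx N \<times> Idx N)
              (mmult (Idx N \<times> Idx N)
                (mmult (Idx N \<times> Idx N)
                  (mmult (Idx N \<times> Idx N)
                     (ipow (Idx N \<times> Idx N) (kron (Ym N) idm) (- a))
                     (ipow (Idx N \<times> Idx N) (kron (Zm N) idm) (- c)))
                  (Rmat N rt ar yr am ym an yn))
                (ipow (Idx N \<times> Idx N) (kron (Zm N) idm) c))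
              (ipow (Idx N \<times> Idx N) (kron idm (Zm N)) (- a)) p q"
proof -
  \<comment> \<open>The identity is purely algebraic: regularity, the choice of N-th root and the
     branch convention for r are not needed.\<close>
  have N: "N > 0" "odd N"
    using assms(1,2) by auto
  let ?I = "Idx N \<times> Idx N"
  let ?conj = "\<lambda>Y Z1 Z1' Z2. mmult ?I (mmult ?I (mmult ?I (mmult ?I Y Z1)
                 (Rmat N rt ar yr am ym an yn)) Z1') Z2"
  note Y = ipow_kron_idm[OF finite_Idx finite_Idx Ypow_family[OF N]]
  note Z1 = ipow_kron_idm[OF finite_Idx finite_Idx Zpow_family[OF N(1)]]
  note Z2 = ipow_idm_kron[OF finite_Idx finite_Idx Zpow_family[OF N(1)]]
  have "mat_eq_on ?I
      (?conj (ipow ?I (kron (Ym N) idm) (- a)) (ipow ?I (kron (Zm N) idm) (- c))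
             (ipow ?I (kron (Zm N) idm) c) (ipow ?I (kron idm (Zm N)) (- a)))
      (?conj (kron (Ypow N (- a)) idm) (kron (Zpow N (- c)) idm)
             (kron (Zpow N c) idm) (kron idm (Zpow N (- a))))"
    unfolding Ym_eq_Ypow[OF N] Zm_eq_Zpow
    by (intro mmult_mat_eq_on_cong Y Z1 Z2 mat_eq_on_refl)
  moreover have "Rmat_ac N rt ar yr am ym an yn a c p q
      = (yprod N rt ar yr am ym * yprod N rt am ym an yn) ^ PP N * om_half N (a * c)
        * ?conj (kron (Ypow N (- a)) idm) (kron (Zpow N (- c)) idm)
                (kron (Zpow N c) idm) (kron idm (Zpow N (- a))) p q"
    if "p \<in> ?I" "q \<in> ?I" for p q
    using that by (auto simp: conjugate_entry[OF N(1)] Rmat_ac_entry[OF N])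
  ultimately show ?thesis
    unfolding mat_eq_on_def by simp
qed

end
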